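(* Let $f:\mathbb{Z}^n\to\mathbb{R}\cup\{+\infty\}$ be a function satisfying condition (SSQM$^\natural$) with $\arg\min f\neq\emptyset$, and let $x\in\mathrm{dom}\,f$. (i) Let $i\in N$ and suppose that the minimum of $f(x-\chi_i+\chi_{j'})$ over $j'\in N\cup\{0\}$ is attained by some $j\in N$ (i.e., $j\neq 0$). Then there exists a minimizer $x^*$ of $f$ satisfying $x^*(j)\ge x(j)+1$ if $j\in N\setminus\{i\}$, and $x^*(i)\ge x(i)$ if $j=i$. (ii) Let $j\in N$ and suppose that the minimum of $f(x-\chi_{i'}+\chi_j)$ over $i'\in N\cup\{0\}$ is attained by some $i\in N$ (i.e., $i\neq 0$). Then there exists a minimizer $x^*$ of $f$ satisfying $x^*(i)\le x(i)-1$ if $i\in N\setminus\{j\}$, and $x^*(j)\le x(j)$ if $i=j$. (iii) Suppose that the minimum of $f(x+\chi_{j'})$ over $j'\in N\cup\{0\}$ is attained by some $j\in N$ (i.e., $j\ne 0$). Then there exists a minimizer $x^*$ of $f$ satisfying $x^*(j)\ge x(j)+1$. (iv) Suppose that the minimum of $f(x-\chi_{i'})$ over $i'\in N\cup\{0\}$ is attained by some $i\in N$ (i.e., $i\neq 0$). Then there exists a minimizer $x^*$ of $f$ satisfying $x^*(i)\le x(i)-1$.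
   Context: $N=\{1,\dots,n\}$. For $i\in N$, $\chi_i\in\{0,1\}^n$ is the characteristic vector of $i$, and $\chi_0=0$. $\mathrm{dom}\,f=\{x\in\mathbb{Z}^n\mid f(x)<+\infty\}$. For $x,y\in\mathbb{Z}^n$, $\mathrm{supp}^+(x-y)=\{i\in N\mid x(i)>y(i)\}$ and $\mathrm{supp}^-(x-y)=\{j\in N\mid x(j)<y(j)\}$. Condition (SSQM$^\natural$): for all $x,y\in\mathrm{dom}\,f$ and all $i\in\mathrm{supp}^+(x-y)$ there exists $j\in\mathrm{supp}^-(x-y)\cup\{0\}$ such that at least one of the following holds: (a) $f(x-\chi_i+\chi_j)<f(x)$; (b) $f(y+\chi_i-\chi_j)<f(y)$; (c) $f(x-\chi_i+\chi_j)=f(x)$ and $f(y+\chi_i-\chi_j)=f(y)$. *)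

theory Defs
  imports Main "HOL-Library.Extended_Real" "HOL-Library.Function_Algebras"
begin

text \<open>Points of Z^n are functions from a finite index type 'n (playing the role of N) to int.
  The index set N \<union> {0} is modelled as 'n option, with None standing for 0.\<close>

definition chi :: "'n option \<Rightarrow> ('n \<Rightarrow> int)" where
  "chi j = (case j of None \<Rightarrow> (\<lambda>_. 0) | Some i \<Rightarrow> (\<lambda>k. if k = i then 1 else 0))"

definition dom_f :: "(('n \<Rightarrow> int) \<Rightarrow> ereal) \<Rightarrow> ('n \<Rightarrow> int) set" where
  "dom_f f = {x. f x < \<infinity>}"

definition argmin_f :: "(('n \<Rightarrow> int) \<Rightarrow> ereal) \<Rightarrow> ('n \<Rightarrow> int) set" where
  "argmin_f f = {x. \<forall>y. f x \<le> f y}"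

definition SSQM_nat :: "(('n \<Rightarrow> int) \<Rightarrow> ereal) \<Rightarrow> bool" where
  "SSQM_nat f \<longleftrightarrow>
     (\<forall>x\<in>dom_f f. \<forall>y\<in>dom_f f. \<forall>i. x i > y i \<longrightarrow>
        (\<exists>j. (j = None \<or> (\<exists>j'. j = Some j' \<and> x j' < y j')) \<and>
           (f (x - chi (Some i) + chi j) < f x \<or>
            f (y + chi (Some i) - chi j) < f y \<or>
            (f (x - chi (Some i) + chi j) = f x \<and> f (y + chi (Some i) - chi j) = f y))))"

end

theory Submission
  imports Defs
begin

text \<open>Suppose \<open>y \<in> dom f\<close> cannot be improved by any exchange \<open>y - \<chi>\<^sub>j + \<chi>\<^sub>k\<close>, \<open>k \<in> N \<union> {0}\<close>.
  If every minimizer had \<open>x\<^sup>*(j) < y(j)\<close>, then (SSQM\<open>\<^sup>\<natural>\<close>) applied to \<open>y\<close>, a minimizer \<open>x\<^sup>*\<close>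
  and \<open>j\<close> rules out alternatives (a) and (b), so (c) produces the minimizer
  \<open>x\<^sup>* + \<chi>\<^sub>j - \<chi>\<^sub>k\<close> with \<open>k \<noteq> j\<close>; iterating, the \<open>j\<close>-th coordinate of minimizers would be
  unbounded while staying below \<open>y(j)\<close>. Parts (i) and (iii) are this with
  \<open>y = x - \<chi>\<^sub>i + \<chi>\<^sub>j\<close> and \<open>y = x + \<chi>\<^sub>j\<close>; parts (ii) and (iv) follow by applying it to
  \<open>f(-\<cdot>)\<close>, which again satisfies (SSQM\<open>\<^sup>\<natural>\<close>).\<close>

lemma chi_apply: "chi k j = (if k = Some j then 1 else 0)"
  by (cases k) (auto simp: chi_def)

lemma chi_None [simp]: "chi None = 0"
  by (simp add: chi_def zero_fun_def)

lemma exists_ge_by_unit_steps: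
  fixes g :: "'a \<Rightarrow> int"
  assumes "s\<^sub>0 \<in> S"
    and step: "\<And>s. s \<in> S \<Longrightarrow> g s < b \<Longrightarrow> \<exists>s'\<in>S. g s' = g s + 1"
  shows "\<exists>s\<in>S. b \<le> g s"
proof -
  have "\<exists>s'\<in>S. b \<le> g s'" if "s \<in> S" "b - g s \<le> int n" for n s
    using that
  proof (induction n arbitrary: s)
    case 0
    then show ?case by auto
  next
    case (Suc n)
    show ?case
    proof (cases "b \<le> g s")
      case True
      with Suc.prems show ?thesis by blast
    next
      case False
      with step Suc.prems obtain s' where "s' \<in> S" "g s' = g s + 1"
        by (meson not_le)
      with Suc show ?thesis by auto
    qed
  qed
  from this[OF assms(1), of "nat (b - g s\<^sub>0)"] show ?thesis by simp
qed

lemma SSQM_nat_argmin_step: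
  assumes ssqm: "SSQM_nat f"
    and xs: "xs \<in> argmin_f f"
    and y: "y \<in> dom_f f" "xs j < y j"
    and y_opt: "\<And>k. f y \<le> f (y - chi (Some j) + chi k)"
  shows "\<exists>xs'\<in>argmin_f f. xs' j = xs j + 1"
proof -
  have xs_min: "\<And>z. f xs \<le> f z"
    using xs by (simp add: argmin_f_def)
  with y(1) have "xs \<in> dom_f f"
    by (auto simp: dom_f_def intro: le_less_trans)
  with ssqm y obtain k where
    k: "k = None \<or> (\<exists>k'. k = Some k' \<and> y k' < xs k')" and
    alt: "f (y - chi (Some j) + chi k) < f y \<or> f (xs + chi (Some j) - chi k) < f xs \<or>
      (f (y - chi (Some j) + chi k) = f y \<and> f (xs + chi (Some j) - chi k) = f xs)"
    unfolding SSQM_nat_def by blast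
  have "f (xs + chi (Some j) - chi k) = f xs"
    using alt y_opt[of k] xs_min[of "xs + chi (Some j) - chi k"] by auto
  then have "xs + chi (Some j) - chi k \<in> argmin_f f"
    using xs_min by (simp add: argmin_f_def)
  moreover have "k \<noteq> Some j"
    using k y(2) by auto
  then have "(xs + chi (Some j) - chi k) j = xs j + 1"
    by (simp add: chi_apply)
  ultimately show ?thesis by blast
qed

lemma SSQM_nat_argmin_ge_if_no_improving_exchange:
  assumes ssqm: "SSQM_nat f"
    and argmin_ne: "argmin_f f \<noteq> {}"
    and y: "y \<in> dom_f f"
    and y_opt: "\<And>k. f y \<le> f (y - chi (Some j) + chi k)"
  shows "\<exists>xs\<in>argmin_f f. y j \<le> xs j"
proof -
  from argmin_ne obtain xs\<^sub>0 where "xs\<^sub>0 \<in> argmin_f f" by blast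
  then show ?thesis
  proof (rule exists_ge_by_unit_steps)
    fix xs assume "xs \<in> argmin_f f" "xs j < y j"
    then show "\<exists>xs'\<in>argmin_f f. xs' j = xs j + 1"
      using SSQM_nat_argmin_step[OF ssqm _ y _ y_opt] by blast
  qed
qed

lemma SSQM_nat_reflect:
  assumes "SSQM_nat f"
  shows "SSQM_nat (\<lambda>z. f (- z))"
  unfolding SSQM_nat_def
proof (intro ballI allI impI)
  fix x y i
  assume "x \<in> dom_f (\<lambda>z. f (- z))" "y \<in> dom_f (\<lambda>z. f (- z))" "y i < x i"
  then have "- y \<in> dom_f f" "- x \<in> dom_f f" "(- x) i < (- y) i"
    by (auto simp: dom_f_def)
  with assms obtain j where j:
    "j = None \<or> (\<exists>j'. j = Some j' \<and> (- y) j' < (- x) j')"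
    "f (- y - chi (Some i) + chi j) < f (- y) \<or> f (- x + chi (Some i) - chi j) < f (- x) \<or>
      (f (- y - chi (Some i) + chi j) = f (- y) \<and> f (- x + chi (Some i) - chi j) = f (- x))"
    unfolding SSQM_nat_def by blast
  have neg: "- (x - chi (Some i) + chi j) = - x + chi (Some i) - chi j"
    "- (y + chi (Some i) - chi j) = - y - chi (Some i) + chi j" for j
    by (simp_all add: algebra_simps)
  from j(1) have "j = None \<or> (\<exists>j'. j = Some j' \<and> x j' < y j')"
    by auto
  then show "\<exists>j. (j = None \<or> (\<exists>j'. j = Some j' \<and> x j' < y j')) \<and>
      (f (- (x - chi (Some i) + chi j)) < f (- x) \<or>
       f (- (y + chi (Some i) - chi j)) < f (- y) \<or>
       (f (- (x - chi (Some i) + chi j)) = f (- x) \<and> f (- (y + chi (Some i) - chi j)) = f (- y)))"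
    unfolding neg using j(2) by (intro exI[of _ j] conjI) blast+
qed

lemma argmin_f_reflect: "argmin_f (\<lambda>z. f (- z)) = uminus ` argmin_f f"
proof -
  have "(\<forall>y. f (- z) \<le> f (- y)) \<longleftrightarrow> (\<forall>y. f (- z) \<le> f y)" for z
    by (metis minus_minus)
  then show ?thesis
    unfolding argmin_f_def by (force simp: image_iff)
qed

lemma SSQM_nat_argmin_ge_best_insertion:
  assumes ssqm: "SSQM_nat f"
    and argmin_ne: "argmin_f f \<noteq> {}"
    and x: "x \<in> dom_f f"
    and best: "\<And>k. f (x - chi a + chi (Some j)) \<le> f (x - chi a + chi k)"
  shows "\<exists>xs\<in>argmin_f f. x j - chi a j + 1 \<le> xs j"
proof -
  let ?y = "x - chi a + chi (Some j)"
  have "?y \<in> dom_f f"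
    using x best[of a] by (auto simp: dom_f_def intro: le_less_trans)
  moreover have "?y - chi (Some j) + chi k = x - chi a + chi k" for k
    by simp
  ultimately obtain xs where "xs \<in> argmin_f f" "?y j \<le> xs j"
    using SSQM_nat_argmin_ge_if_no_improving_exchange[OF ssqm argmin_ne] best by metis
  then show ?thesis
    by (auto simp: chi_apply)
qed

lemma SSQM_nat_argmin_le_best_deletion:
  assumes ssqm: "SSQM_nat f"
    and argmin_ne: "argmin_f f \<noteq> {}"
    and x: "x \<in> dom_f f"
    and best: "\<And>k. f (x - chi (Some i) + chi b) \<le> f (x - chi k + chi b)"
  shows "\<exists>xs\<in>argmin_f f. xs i \<le> x i + chi b i - 1"
proof -
  let ?g = "\<lambda>z. f (- z)"
  have reflect: "- (- x - chi b + chi k) = x - chi k + chi b" for k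
    by (simp add: algebra_simps)
  have "?g (- x - chi b + chi (Some i)) \<le> ?g (- x - chi b + chi k)" for k
    unfolding reflect by (rule best)
  moreover have "- x \<in> dom_f ?g" "argmin_f ?g \<noteq> {}"
    using x argmin_ne by (auto simp: dom_f_def argmin_f_reflect)
  ultimately obtain xs where "xs \<in> argmin_f ?g" "(- x) i - chi b i + 1 \<le> xs i"
    using SSQM_nat_argmin_ge_best_insertion[OF SSQM_nat_reflect[OF ssqm]] by blast
  moreover from \<open>xs \<in> argmin_f ?g\<close> have "- xs \<in> argmin_f f"
    by (auto simp: argmin_f_reflect)
  ultimately show ?thesis
    by (intro bexI[of _ "- xs"]) auto
qed

theorem theorem3p1:
  fixes f :: "('n::finite \<Rightarrow> int) \<Rightarrow> ereal" and x :: "'n \<Rightarrow> int"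
  assumes real_or_inf: "\<And>z. f z \<noteq> -\<infinity>"
    and ssqm: "SSQM_nat f"
    and argmin_ne: "argmin_f f \<noteq> {}"
    and xdom: "x \<in> dom_f f"
  shows
   "(\<forall>i j. (\<forall>j'. f (x - chi (Some i) + chi (Some j)) \<le> f (x - chi (Some i) + chi j')) \<longrightarrow>
       (\<exists>xs\<in>argmin_f f. (j \<noteq> i \<longrightarrow> xs j \<ge> x j + 1) \<and> (j = i \<longrightarrow> xs i \<ge> x i)))
  \<and> (\<forall>i j. (\<forall>i'. f (x - chi (Some i) + chi (Some j)) \<le> f (x - chi i' + chi (Some j))) \<longrightarrow>
       (\<exists>xs\<in>argmin_f f. (i \<noteq> j \<longrightarrow> xs i \<le> x i - 1) \<and> (i = j \<longrightarrow> xs j \<le> x j)))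
  \<and> (\<forall>j. (\<forall>j'. f (x + chi (Some j)) \<le> f (x + chi j')) \<longrightarrow>
       (\<exists>xs\<in>argmin_f f. xs j \<ge> x j + 1))
  \<and> (\<forall>i. (\<forall>i'. f (x - chi (Some i)) \<le> f (x - chi i')) \<longrightarrow>
       (\<exists>xs\<in>argmin_f f. xs i \<le> x i - 1))"
proof (intro conjI allI impI)
  fix i j
  assume "\<forall>j'. f (x - chi (Some i) + chi (Some j)) \<le> f (x - chi (Some i) + chi j')"
  with SSQM_nat_argmin_ge_best_insertion[OF ssqm argmin_ne xdom, of "Some i" j]
  show "\<exists>xs\<in>argmin_f f. (j \<noteq> i \<longrightarrow> xs j \<ge> x j + 1) \<and> (j = i \<longrightarrow> xs i \<ge> x i)"
    by (auto simp: chi_apply)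
next
  fix i j
  assume "\<forall>i'. f (x - chi (Some i) + chi (Some j)) \<le> f (x - chi i' + chi (Some j))"
  with SSQM_nat_argmin_le_best_deletion[OF ssqm argmin_ne xdom, of i "Some j"]
  show "\<exists>xs\<in>argmin_f f. (i \<noteq> j \<longrightarrow> xs i \<le> x i - 1) \<and> (i = j \<longrightarrow> xs j \<le> x j)"
    by (auto simp: chi_apply)
next
  fix j
  assume "\<forall>j'. f (x + chi (Some j)) \<le> f (x + chi j')"
  with SSQM_nat_argmin_ge_best_insertion[OF ssqm argmin_ne xdom, of None j]
  show "\<exists>xs\<in>argmin_f f. xs j \<ge> x j + 1"
    by simp
next
  fix i
  assume "\<forall>i'. f (x - chi (Some i)) \<le> f (x - chi i')"
  with SSQM_nat_argmin_le_best_deletion[OF ssqm argmin_ne xdom, of i None]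
  show "\<exists>xs\<in>argmin_f f. xs i \<le> x i - 1"
    by simp
qed

end
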